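(* Let $G$ be a fullerene graph and $S$ a perfect star packing of $G$. Then each hexagonal face of $G$ contains at most two vertices of $C(S)$. Moreover, if a hexagonal face $h$ contains two vertices of $C(S)$, then these two vertices are antipodal on $h$ (i.e. at distance $3$ along the $6$-cycle $h$).
   Context: A fullerene graph is a finite simple connected (equivalently, $3$-connected) plane cubic graph all of whose faces are pentagons or hexagons. A perfect star packing of $G$ is a spanning subgraph $S$ of $G$ every connected component of which is isomorphic to $K_{1,3}$; $C(S)$ denotes the set of centers (degree-$3$ vertices) of the stars in $S$. *)

theory Defs
  imports Main
begin

definition simple_graph :: "'a set \<Rightarrow> ('a \<Rightarrow> 'a \<Rightarrow> bool) \<Rightarrow> bool" where
  "simple_graph V E \<longleftrightarrow> finite V \<and>
     (\<forall>u v. E u v \<longrightarrow> u \<in> V \<and> v \<in> V \<and> u \<noteq> v \<and> E v u)"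

definition graph_connected :: "'a set \<Rightarrow> ('a \<Rightarrow> 'a \<Rightarrow> bool) \<Rightarrow> bool" where
  "graph_connected V E \<longleftrightarrow> V \<noteq> {} \<and> (\<forall>u\<in>V. \<forall>v\<in>V. E\<^sup>*\<^sup>* u v)"

definition cubic :: "'a set \<Rightarrow> ('a \<Rightarrow> 'a \<Rightarrow> bool) \<Rightarrow> bool" where
  "cubic V E \<longleftrightarrow> (\<forall>v\<in>V. card {u. E v u} = 3)"

definition darts :: "('a \<Rightarrow> 'a \<Rightarrow> bool) \<Rightarrow> ('a \<times> 'a) set" where
  "darts E = {(u, v). E u v}"

definition rotation_system :: "'a set \<Rightarrow> ('a \<Rightarrow> 'a \<Rightarrow> bool) \<Rightarrow> ('a \<Rightarrow> 'a \<Rightarrow> 'a) \<Rightarrow> bool" where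
  "rotation_system V E rho \<longleftrightarrow>
     (\<forall>v\<in>V. \<forall>u. E v u \<longrightarrow> E v (rho v u) \<and> (\<forall>w. E v w \<longrightarrow> (\<exists>k. (rho v ^^ k) u = w)))"

text \<open>Face-tracing permutation on darts and faces (orbits) of the embedding.\<close>
definition face_succ :: "('a \<Rightarrow> 'a \<Rightarrow> 'a) \<Rightarrow> 'a \<times> 'a \<Rightarrow> 'a \<times> 'a" where
  "face_succ rho d = (snd d, rho (snd d) (fst d))"

definition face_of :: "('a \<Rightarrow> 'a \<Rightarrow> 'a) \<Rightarrow> 'a \<times> 'a \<Rightarrow> ('a \<times> 'a) set" where
  "face_of rho d = {(face_succ rho ^^ k) d | k. True}"

definition faces :: "('a \<Rightarrow> 'a \<Rightarrow> bool) \<Rightarrow> ('a \<Rightarrow> 'a \<Rightarrow> 'a) \<Rightarrow> ('a \<times> 'a) set set" where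
  "faces E rho = face_of rho ` darts E"

definition face_vertices :: "('a \<times> 'a) set \<Rightarrow> 'a set" where
  "face_vertices f = fst ` f"

text \<open>A plane (genus 0) embedding of a connected graph, given combinatorially by a rotation
  system satisfying Euler's formula V - E + F = 2.\<close>
definition plane_embedding :: "'a set \<Rightarrow> ('a \<Rightarrow> 'a \<Rightarrow> bool) \<Rightarrow> ('a \<Rightarrow> 'a \<Rightarrow> 'a) \<Rightarrow> bool" where
  "plane_embedding V E rho \<longleftrightarrow> rotation_system V E rho \<and>
     int (card V) - int (card (darts E) div 2) + int (card (faces E rho)) = 2"

definition fullerene :: "'a set \<Rightarrow> ('a \<Rightarrow> 'a \<Rightarrow> bool) \<Rightarrow> ('a \<Rightarrow> 'a \<Rightarrow> 'a) \<Rightarrow> bool" where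
  "fullerene V E rho \<longleftrightarrow> simple_graph V E \<and> graph_connected V E \<and> cubic V E \<and>
     plane_embedding V E rho \<and> (\<forall>f\<in>faces E rho. card f = 5 \<or> card f = 6)"

definition is_K13 :: "'a set \<Rightarrow> ('a \<Rightarrow> 'a \<Rightarrow> bool) \<Rightarrow> bool" where
  "is_K13 C S \<longleftrightarrow> (\<exists>c a b d. C = {c, a, b, d} \<and> distinct [c, a, b, d] \<and>
     (\<forall>x\<in>C. \<forall>y\<in>C. S x y \<longleftrightarrow> (x = c \<and> y \<in> {a, b, d}) \<or> (y = c \<and> x \<in> {a, b, d})))"

definition perfect_star_packing :: "'a set \<Rightarrow> ('a \<Rightarrow> 'a \<Rightarrow> bool) \<Rightarrow> ('a \<Rightarrow> 'a \<Rightarrow> bool) \<Rightarrow> bool" where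
  "perfect_star_packing V E S \<longleftrightarrow> (\<forall>u v. S u v \<longrightarrow> E u v) \<and> (\<forall>u v. S u v \<longrightarrow> S v u) \<and>
     (\<forall>v\<in>V. is_K13 {w. S\<^sup>*\<^sup>* v w} S)"

definition star_centers :: "'a set \<Rightarrow> ('a \<Rightarrow> 'a \<Rightarrow> bool) \<Rightarrow> 'a set" where
  "star_centers V S = {v\<in>V. card {u. S v u} = 3}"

end

theory Submission
  imports Defs
begin

text \<open>The centres of a perfect star packing of a cubic graph are pairwise at distance
  at least 3: a centre is joined in the packing to all three of its neighbours, so an edge
  or a common neighbour would put two centres into the same star, which has only one centre.
  The boundary of a hexagonal face is a closed walk of length 6, and on such a walk two
  distinct vertices at distance at least 3 from each other must lie at positions differing
  by exactly 3.\<close>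

lemma star_center_adjacent_imp_star_edge:
  assumes "simple_graph V E" "cubic V E" "perfect_star_packing V E S"
    and "c \<in> star_centers V S" "E c u"
  shows "S c u"
proof -
  have "c \<in> V" and deg_S: "card {u. S c u} = 3"
    using assms(4) by (auto simp: star_centers_def)
  then have deg_E: "card {u. E c u} = 3"
    using assms(2) by (auto simp: cubic_def)
  have "finite {u. E c u}"
    using assms(1) by (auto simp: simple_graph_def intro: finite_subset[of _ V])
  moreover have "{u. S c u} \<subseteq> {u. E c u}"
    using assms(3) by (auto simp: perfect_star_packing_def)
  ultimately have "{u. S c u} = {u. E c u}"
    using card_subset_eq deg_S deg_E by metis
  then show ?thesis using assms(5) by blast
qed

lemma is_K13_degree_3_unique:
  assumes "is_K13 K S" "\<And>x u. x \<in> K \<Longrightarrow> S x u \<Longrightarrow> u \<in> K"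
    and "x \<in> K" "y \<in> K" "card {u. S x u} = 3" "card {u. S y u} = 3"
  shows "x = y"
proof -
  obtain c a b d where K: "K = {c, a, b, d}" "distinct [c, a, b, d]"
    and S_K: "\<forall>x\<in>K. \<forall>y\<in>K. S x y \<longleftrightarrow> (x = c \<and> y \<in> {a, b, d}) \<or> (y = c \<and> x \<in> {a, b, d})"
    using assms(1) unfolding is_K13_def by blast
  have leaf_degree: "{u. S z u} = {c}" if "z \<in> K" "z \<noteq> c" for z
  proof -
    have "S z u \<longleftrightarrow> u = c" for u
      using assms(2)[OF \<open>z \<in> K\<close>, of u] S_K that K by auto
    then show ?thesis by blast
  qed
  have "z = c" if "z \<in> K" "card {u. S z u} = 3" for z
    using leaf_degree[OF that(1)] that(2) by fastforce
  then show ?thesis using assms(3-6) by metis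
qed

lemma star_centers_connected_imp_eq:
  assumes "perfect_star_packing V E S" "x \<in> star_centers V S" "y \<in> star_centers V S"
    and "S\<^sup>*\<^sup>* x y"
  shows "x = y"
proof -
  have "is_K13 {w. S\<^sup>*\<^sup>* x w} S"
    using assms(1,2) by (simp add: perfect_star_packing_def star_centers_def)
  then show ?thesis
    using is_K13_degree_3_unique[of "{w. S\<^sup>*\<^sup>* x w}" S x y] assms(2-4)
    by (auto simp: star_centers_def)
qed

lemma star_centers_not_adjacent:
  assumes "simple_graph V E" "cubic V E" "perfect_star_packing V E S"
    and "x \<in> star_centers V S" "y \<in> star_centers V S"
  shows "\<not> E x y"
proof
  assume "E x y"
  then have "S x y" using star_center_adjacent_imp_star_edge assms by metis
  then have "x = y" using star_centers_connected_imp_eq[OF assms(3-5)] by auto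
  with \<open>E x y\<close> show False using assms(1) by (auto simp: simple_graph_def)
qed

lemma star_centers_common_neighbour_imp_eq:
  assumes "simple_graph V E" "cubic V E" "perfect_star_packing V E S"
    and "x \<in> star_centers V S" "y \<in> star_centers V S" "E x u" "E y u"
  shows "x = y"
proof -
  have "S x u" "S y u" using star_center_adjacent_imp_star_edge assms by metis+
  moreover have "S u y" using \<open>S y u\<close> assms(3) by (auto simp: perfect_star_packing_def)
  ultimately have "S\<^sup>*\<^sup>* x y" by auto
  then show ?thesis using star_centers_connected_imp_eq[OF assms(3-5)] by blast
qed

lemma closed_walk_6_antipodal:
  fixes w :: "nat \<Rightarrow> 'a"
  assumes sym: "\<And>a b. E a b \<Longrightarrow> E b a"
    and walk: "\<And>k. E (w k) (w (Suc k))"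
    and closed: "\<And>k. w (k mod 6) = w k"
    and not_adjacent: "\<And>x y. x \<in> C \<Longrightarrow> y \<in> C \<Longrightarrow> \<not> E x y"
    and common_neighbour: "\<And>x y u. x \<in> C \<Longrightarrow> y \<in> C \<Longrightarrow> E x u \<Longrightarrow> E y u \<Longrightarrow> x = y"
    and "w i \<in> C" "w j \<in> C" "w i \<noteq> w j"
  shows "w j = w (i + 3)"
proof -
  \<comment> \<open>m is (j - i) mod 6, written without truncated subtraction\<close>
  define m where "m = (j + 5 * i) mod 6"
  have "(i + m) mod 6 = j mod 6" unfolding m_def by presburger
  then have wj: "w j = w (i + m)" using closed by metis
  have w6: "w (i + 6) = w i" using closed by (metis mod_add_self2)
  have "m < 6" unfolding m_def by simp
  then consider "m = 0" | "m = 1" | "m = 2" | "m = 3" | "m = 4" | "m = 5" by linarith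
  then show ?thesis
  proof cases
    case 1
    then show ?thesis using assms(8) wj by simp
  next
    case 2
    then show ?thesis using not_adjacent[OF assms(6,7)] walk[of i] wj by simp
  next
    case 3
    then have "E (w j) (w (i + 1))" using walk[of "i + 1"] wj sym by (simp add: numeral_2_eq_2)
    then show ?thesis using common_neighbour[OF assms(6,7)] walk[of i] assms(8) by auto
  next
    case 4
    then show ?thesis using wj by simp
  next
    case 5
    then have "E (w j) (w (i + 5))" using walk[of "i + 4"] wj sym by (simp add: eval_nat_numeral)
    moreover have "E (w i) (w (i + 5))"
      using walk[of "i + 5"] w6 sym by (simp add: eval_nat_numeral)
    ultimately show ?thesis using common_neighbour[OF assms(6,7)] assms(8) by blast
  next
    case 6
    then have "E (w j) (w i)" using walk[of "i + 5"] w6 wj by (simp add: eval_nat_numeral)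
    then show ?thesis using not_adjacent[OF assms(7,6)] by blast
  qed
qed

lemma card_le_2_if_antipodal:
  fixes w :: "nat \<Rightarrow> 'a"
  assumes antipodal: "\<And>i j. w i \<in> C \<Longrightarrow> w j \<in> C \<Longrightarrow> w i \<noteq> w j \<Longrightarrow> w j = w (i + 3)"
  shows "card (range w \<inter> C) \<le> 2"
proof (cases "range w \<inter> C = {}")
  case False
  then obtain i where "w i \<in> C" by auto
  have "range w \<inter> C \<subseteq> {w i, w (i + 3)}"
  proof
    fix y assume "y \<in> range w \<inter> C"
    then obtain j where "y = w j" "w j \<in> C" by blast
    then show "y \<in> {w i, w (i + 3)}"
      using antipodal[OF \<open>w i \<in> C\<close>] by (cases "w i = w j") simp_all
  qed
  then have "card (range w \<inter> C) \<le> card {w i, w (i + 3)}" by (intro card_mono) auto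
  also have "\<dots> \<le> 2" by (simp add: card_insert_le_m1)
  finally show ?thesis .
qed simp

lemma rotation_system_surj:
  assumes "simple_graph V E" "rotation_system V E rho" "E v w"
  shows "\<exists>u. E v u \<and> rho v u = w"
proof -
  have "v \<in> V" using assms(1,3) by (auto simp: simple_graph_def)
  then have step: "\<And>u. E v u \<Longrightarrow> E v (rho v u)"
    using assms(2) by (auto simp: rotation_system_def)
  obtain k where k: "(rho v ^^ k) (rho v w) = w"
    using assms(2,3) step[OF assms(3)] \<open>v \<in> V\<close> unfolding rotation_system_def by blast
  have "E v ((rho v ^^ n) w)" for n by (induction n) (auto simp: step assms(3))
  then show ?thesis using k by (metis funpow_swap1)
qed

lemma rotation_system_inj_on:
  assumes "simple_graph V E" "rotation_system V E rho"
  shows "inj_on (rho v) {u. E v u}"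
proof (cases "v \<in> V")
  case True
  have "finite {u. E v u}"
    using assms(1) by (auto simp: simple_graph_def intro: finite_subset[of _ V])
  moreover have "rho v ` {u. E v u} = {u. E v u}"
    using rotation_system_surj[OF assms] assms(2) True by (auto simp: rotation_system_def)
  ultimately show ?thesis using eq_card_imp_inj_on by metis
next
  case False
  then have "{u. E v u} = {}" using assms(1) by (auto simp: simple_graph_def)
  then show ?thesis by simp
qed

lemma face_succ_in_darts:
  assumes "simple_graph V E" "rotation_system V E rho" "d \<in> darts E"
  shows "face_succ rho d \<in> darts E"
proof -
  obtain a b where d: "d = (a, b)" and "E a b" using assms(3) by (auto simp: darts_def)
  then have "E b a" "b \<in> V" using assms(1) by (auto simp: simple_graph_def)
  then have "E b (rho b a)" using assms(2) by (auto simp: rotation_system_def)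
  then show ?thesis using d by (simp add: darts_def face_succ_def)
qed

lemma inj_on_face_succ:
  assumes "simple_graph V E" "rotation_system V E rho"
  shows "inj_on (face_succ rho) (darts E)"
proof (rule inj_onI)
  fix d d' assume "d \<in> darts E" "d' \<in> darts E" "face_succ rho d = face_succ rho d'"
  then obtain a a' b where d: "d = (a, b)" "d' = (a', b)" "E b a" "E b a'" "rho b a = rho b a'"
    using assms(1) by (auto simp: darts_def face_succ_def simple_graph_def)
  then have "a = a'" using rotation_system_inj_on[OF assms, of b] by (auto dest: inj_onD)
  then show "d = d'" using d by simp
qed

lemma inj_on_funpow_cancel:
  assumes "inj_on f D" "\<And>k. (f ^^ k) x \<in> D" "(f ^^ a) x = (f ^^ (a + p)) x"
  shows "(f ^^ p) x = x"
  using assms(3)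
proof (induction a)
  case (Suc a)
  then have "f ((f ^^ a) x) = f ((f ^^ (a + p)) x)" by simp
  then show ?case using Suc.IH assms(1,2) by (auto dest: inj_onD)
qed simp

text \<open>By pigeonhole two of the first n + 1 iterates coincide, which yields a period
  p \<le> n; the orbit is covered by the first p iterates, so p = n.\<close>
lemma inj_on_orbit_period:
  assumes "inj_on f D" "\<And>k. (f ^^ k) x \<in> D" "card {(f ^^ k) x | k. True} = n" "n > 0"
  shows "(f ^^ n) x = x"
proof -
  define orb where "orb k = (f ^^ k) x" for k
  have orbit: "{(f ^^ k) x | k. True} = range orb" by (auto simp: orb_def)
  then have "finite (range orb)" using assms(3,4) card_ge_0_finite by metis
  then have "card (orb ` {..n}) \<le> n"
    using card_mono[of "range orb" "orb ` {..n}"] assms(3) orbit by auto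
  then have "\<not> inj_on orb {..n}" by (auto dest: card_image)
  then obtain a b where ab: "a < b" "b \<le> n" "orb a = orb b"
    unfolding inj_on_def by (metis atMost_iff linorder_neqE_nat)
  have period: "(f ^^ (b - a)) x = x"
    using inj_on_funpow_cancel[OF assms(1,2), of a "b - a"] ab by (simp add: orb_def)
  have "range orb \<subseteq> orb ` {..<b - a}"
  proof
    fix y assume "y \<in> range orb"
    then obtain k where "y = orb k" by blast
    then have "y = orb (k mod (b - a))" by (simp add: orb_def funpow_mod_eq[OF period])
    then show "y \<in> orb ` {..<b - a}" using ab(1) by auto
  qed
  then have "n \<le> card (orb ` {..<b - a})"
    using card_mono[OF finite_imageI[of "{..<b - a}" orb]] assms(3) orbit by auto
  also have "\<dots> \<le> b - a" using card_image_le[of "{..<b - a}" orb] by simp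
  finally have "b - a = n" using ab by linarith
  then show ?thesis using period by simp
qed

lemma face_closed_walk:
  assumes "simple_graph V E" "rotation_system V E rho" "h \<in> faces E rho" "card h = n" "n > 0"
  obtains d where "h = {(face_succ rho ^^ k) d | k. True}"
    and "(face_succ rho ^^ n) d = d"
    and "\<And>k. E (fst ((face_succ rho ^^ k) d)) (fst ((face_succ rho ^^ Suc k) d))"
proof -
  obtain d where d: "d \<in> darts E" "h = {(face_succ rho ^^ k) d | k. True}"
    using assms(3) by (auto simp: faces_def face_of_def)
  have in_darts: "(face_succ rho ^^ k) d \<in> darts E" for k
    by (induction k) (auto simp: d face_succ_in_darts[OF assms(1,2)])
  have "E (fst ((face_succ rho ^^ k) d)) (fst ((face_succ rho ^^ Suc k) d))" for k
    using in_darts[of k] by (cases "(face_succ rho ^^ k) d") (simp add: darts_def face_succ_def)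
  moreover have "(face_succ rho ^^ n) d = d"
    using inj_on_orbit_period[OF inj_on_face_succ[OF assms(1,2)] in_darts] d(2) assms(4,5) by simp
  ultimately show ?thesis using that d(2) by blast
qed

theorem mainTheorem4:
  fixes V :: "'a set" and E S :: "'a \<Rightarrow> 'a \<Rightarrow> bool" and rho :: "'a \<Rightarrow> 'a \<Rightarrow> 'a"
    and h :: "('a \<times> 'a) set"
  assumes "fullerene V E rho"
    and "perfect_star_packing V E S"
    and "h \<in> faces E rho" and "card h = 6"
  shows "card (face_vertices h \<inter> star_centers V S) \<le> 2 \<and>
    (\<forall>x y. x \<in> face_vertices h \<inter> star_centers V S \<longrightarrow> y \<in> face_vertices h \<inter> star_centers V S
       \<longrightarrow> x \<noteq> y \<longrightarrow> (\<exists>d\<in>h. fst d = x \<and> fst ((face_succ rho ^^ 3) d) = y))"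
proof -
  have G: "simple_graph V E" "cubic V E" "rotation_system V E rho"
    using assms(1) by (auto simp: fullerene_def plane_embedding_def)
  obtain d where h: "h = {(face_succ rho ^^ k) d | k. True}"
    and closed: "(face_succ rho ^^ 6) d = d"
    and walk: "\<And>k. E (fst ((face_succ rho ^^ k) d)) (fst ((face_succ rho ^^ Suc k) d))"
    by (rule face_closed_walk[OF G(1,3) assms(3,4)]) auto
  define w where "w k = fst ((face_succ rho ^^ k) d)" for k
  have vertices: "face_vertices h = range w"
    using h by (auto simp: face_vertices_def w_def)
  have sym: "\<And>a b. E a b \<Longrightarrow> E b a" using G(1) by (auto simp: simple_graph_def)
  have period: "\<And>k. w (k mod 6) = w k" by (simp add: w_def funpow_mod_eq[OF closed])
  have antipodal: "w j = w (i + 3)"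
    if "w i \<in> star_centers V S" "w j \<in> star_centers V S" "w i \<noteq> w j" for i j
    using closed_walk_6_antipodal[of E w, OF sym walk[folded w_def] period
        star_centers_not_adjacent[OF G(1,2) assms(2)]
        star_centers_common_neighbour_imp_eq[OF G(1,2) assms(2)] that] .
  have "\<exists>d\<in>h. fst d = x \<and> fst ((face_succ rho ^^ 3) d) = y"
    if centers: "x \<in> range w \<inter> star_centers V S" "y \<in> range w \<inter> star_centers V S" "x \<noteq> y"
    for x y
  proof -
    obtain i where "x = w i" using centers(1) by blast
    then have "y = w (i + 3)" using antipodal centers by blast
    moreover have "(face_succ rho ^^ 3) ((face_succ rho ^^ i) d) = (face_succ rho ^^ (i + 3)) d"
      by (metis add.commute comp_apply funpow_add)
    moreover have "(face_succ rho ^^ i) d \<in> h" using h by blast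
    ultimately show ?thesis using \<open>x = w i\<close> by (intro bexI) (auto simp: w_def)
  qed
  then show ?thesis using card_le_2_if_antipodal[of w, OF antipodal] vertices by simp
qed

end
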